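(* Let $k$ be an infinite field. For each $i\in\mathbb{Z}$ let $M_i$ and $N_i$ be square matrices over $k$ of trace zero, of sizes $m_i$ and $n_i$ respectively. Then one can choose square matrices $p_i,q_i$ (of size $m_i$) and $s_i,t_i$ (of size $n_i$) over $k$, for all $i\in\mathbb{Z}$, such that for every $i$: (A1) $M_i=p_iq_i-q_ip_i$; (A2) $N_i=s_it_i-t_is_i$; (A3) $p_i\otimes I_{n_i}-I_{m_i}\otimes s_i^T$ is invertible; (A4) $q_{i+1}\otimes I_{m_i}-I_{m_{i+1}}\otimes q_i^T$ is invertible; (A5) $s_i\otimes I_{m_{i+1}}-I_{n_i}\otimes p_{i+1}^T$ is invertible.
   Context: $I_k$ is the $k\times k$ identity matrix, $\otimes$ is the Kronecker (tensor) product of matrices, $M^T$ is the transpose. By convention the empty $0\times 0$ matrix is invertible (sizes $m_i,n_i$ may be $0$). *)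

theory Defs
  imports "Jordan_Normal_Form.Matrix"
begin

definition mat_trace :: "'a :: comm_ring_1 mat \<Rightarrow> 'a" where
  "mat_trace A = (\<Sum>i<dim_row A. A $$ (i, i))"

definition kron :: "'a :: comm_ring_1 mat \<Rightarrow> 'a mat \<Rightarrow> 'a mat" where
  "kron A B = mat (dim_row A * dim_row B) (dim_col A * dim_col B)
     (\<lambda>(i, j). A $$ (i div dim_row B, j div dim_col B) * B $$ (i mod dim_row B, j mod dim_col B))"

end

theory Submission
  imports Defs "Jordan_Normal_Form.Char_Poly" "Jordan_Normal_Form.Gauss_Jordan_Elimination"
begin

text \<open>
  Over an infinite field every trace-zero matrix is a commutator \<open>p q - q p\<close> (Shoda).
  A scalar matrix of trace zero is the commutator of two weighted shift matrices. Any other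
  matrix is similar to one with vanishing \<open>(0,0)\<close> entry; its lower-right block is a commutator
  \<open>p q - q p\<close> by induction, and the border can be solved for once \<open>p\<close> is bordered by a scalar
  \<open>e\<close> that is not an eigenvalue of \<open>p\<close>.

  Shifting \<open>p\<close> and \<open>q\<close> by scalar matrices does not change \<open>p q - q p\<close>, and shifting \<open>A\<close>
  by \<open>a I\<close> and \<open>B\<close> by \<open>b I\<close> changes the Sylvester matrix \<open>A \<otimes> I - I \<otimes> B\<^sup>T\<close> by \<open>(a - b) I\<close>.
  That matrix is singular for only finitely many values of \<open>a - b\<close>, so, the field being
  infinite, the shifts of \<open>p\<^sub>0, s\<^sub>0, p\<^sub>1, s\<^sub>1, \<dots>\<close> (for (A3) and (A5)) and of
  \<open>q\<^sub>0, q\<^sub>1, \<dots>\<close> (for (A4)) can be chosen with all successive differences avoiding these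
  finite sets.
\<close>

lemma mat_trace_mult_commute:
  fixes A B :: "'a::comm_ring_1 mat"
  assumes A: "A \<in> carrier_mat nr nc" and B: "B \<in> carrier_mat nc nr"
  shows "mat_trace (A * B) = mat_trace (B * A)"
proof -
  have "mat_trace (A * B) = (\<Sum>i<nr. \<Sum>k<nc. A $$ (i,k) * B $$ (k,i))"
    unfolding mat_trace_def using A B
    by (auto intro!: sum.cong simp: scalar_prod_def atLeast0LessThan)
  also have "\<dots> = (\<Sum>k<nc. \<Sum>i<nr. B $$ (k,i) * A $$ (i,k))"
    by (subst sum.swap) (simp add: mult.commute)
  also have "\<dots> = mat_trace (B * A)"
    unfolding mat_trace_def using A B
    by (auto intro!: sum.cong simp: scalar_prod_def atLeast0LessThan)
  finally show ?thesis .
qed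

lemma mat_trace_similar:
  fixes A B :: "'a::comm_ring_1 mat"
  assumes "similar_mat A B"
  shows "mat_trace A = mat_trace B"
proof -
  obtain n P Q where c: "{A, B, P, Q} \<subseteq> carrier_mat n n" and QP: "Q * P = 1\<^sub>m n"
    and A: "A = P * B * Q"
    using similar_matD[OF assms] by blast
  have "mat_trace A = mat_trace (P * (B * Q))"
    using c A by (simp add: assoc_mult_mat[of _ n n _ n _ n])
  also have "\<dots> = mat_trace (B * Q * P)"
    using c by (intro mat_trace_mult_commute[of _ n n]) auto
  also have "\<dots> = mat_trace B"
    using c QP by (simp add: assoc_mult_mat[of _ n n _ n _ n] right_mult_one_mat[of B n n])
  finally show ?thesis .
qed

lemma mat_trace_smult_one: "mat_trace (a \<cdot>\<^sub>m 1\<^sub>m n) = of_nat n * a"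
  unfolding mat_trace_def by simp

definition is_commutator :: "nat \<Rightarrow> 'a::comm_ring_1 mat \<Rightarrow> bool" where
  "is_commutator n M \<longleftrightarrow>
     (\<exists>p q. p \<in> carrier_mat n n \<and> q \<in> carrier_mat n n \<and> M = p * q - q * p)"

lemma is_commutator_similar:
  fixes A B :: "'a::comm_ring_1 mat"
  assumes sim: "similar_mat A B" and B: "B \<in> carrier_mat n n" and comm: "is_commutator n B"
  shows "is_commutator n A"
proof -
  obtain n' P Q where "{A, B, P, Q} \<subseteq> carrier_mat n' n'" "Q * P = 1\<^sub>m n'"
    and A: "A = P * B * Q"
    using similar_matD[OF sim] by blast
  with B have P: "P \<in> carrier_mat n n" and Q: "Q \<in> carrier_mat n n" and QP: "Q * P = 1\<^sub>m n"
    by auto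
  obtain p q where p: "p \<in> carrier_mat n n" and q: "q \<in> carrier_mat n n"
    and Bpq: "B = p * q - q * p"
    using comm unfolding is_commutator_def by blast
  have conj_mult: "P * x * Q * (P * y * Q) = P * (x * y) * Q"
    if "x \<in> carrier_mat n n" "y \<in> carrier_mat n n" for x y
  proof -
    have "Q * (P * (y * Q)) = y * Q"
      using that P Q QP by (simp flip: assoc_mult_mat[of Q n n P n "y * Q" n])
    then show ?thesis
      using that P Q by (simp add: assoc_mult_mat[of _ n n _ n _ n] mult_carrier_mat)
  qed
  have "A = (P * (p * q) - P * (q * p)) * Q"
    unfolding A Bpq mult_minus_distrib_mat[OF P mult_carrier_mat[OF p q] mult_carrier_mat[OF q p]] ..
  also have "\<dots> = P * (p * q) * Q - P * (q * p) * Q"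
    using P Q p q by (intro minus_mult_distrib_mat[of _ n n _ _ n]) auto
  also have "\<dots> = (P * p * Q) * (P * q * Q) - (P * q * Q) * (P * p * Q)"
    using conj_mult p q by simp
  finally show ?thesis
    unfolding is_commutator_def using P Q p q
    by (intro exI[of _ "P * p * Q"] exI[of _ "P * q * Q"]) auto
qed

lemma addrow_mat_mult_index:
  assumes "Z \<in> carrier_mat n nc" "c < n" "a < n" "b < nc"
  shows "(addrow_mat n t r c * Z) $$ (a, b) = Z $$ (a, b) + (if a = r then t * Z $$ (c, b) else 0)"
  using assms by (auto simp: add.commute simp flip: addrow_mat[of Z n nc c t r])

lemma mult_addrow_mat_index:
  fixes Z :: "'a::comm_ring_1 mat"
  assumes "Z \<in> carrier_mat nr n" "r < n" "a < nr" "b < n"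
  shows "(Z * addrow_mat n t r c) $$ (a, b) = Z $$ (a, b) + (if b = c then t * Z $$ (a, r) else 0)"
proof -
  have "(Z * addrow_mat n t r c) $$ (a, b) =
      (\<Sum>k\<in>{0..<n}. (if k = b then Z $$ (a, b) else 0) + (if k = r \<and> b = c then t * Z $$ (a, r) else 0))"
    using assms by (auto simp: scalar_prod_def algebra_simps intro!: sum.cong)
  then show ?thesis
    using assms by (simp add: sum.distrib algebra_simps)
qed

lemma addrow_mat_conjugate_index:
  fixes M :: "'a::comm_ring_1 mat"
  assumes M: "M \<in> carrier_mat n n" and rc: "r < n" "c < n" and ab: "a < n" "b < n"
  shows "(addrow_mat n t r c * M * addrow_mat n (- t) r c) $$ (a, b) =
    M $$ (a, b) + (if a = r then t * M $$ (c, b) else 0) - (if b = c then t * M $$ (a, r) else 0)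
      - (if a = r \<and> b = c then t * t * M $$ (c, r) else 0)"
proof -
  have XM: "addrow_mat n t r c * M \<in> carrier_mat n n"
    using M by (rule mult_carrier_mat[OF addrow_mat_carrier])
  show ?thesis
    unfolding mult_addrow_mat_index[OF XM rc(1) ab] addrow_mat_mult_index[OF M rc(2) ab]
      addrow_mat_mult_index[OF M rc(2) ab(1) rc(1)]
    by (cases "a = r"; cases "b = c") (simp_all add: algebra_simps)
qed

lemma similar_mat_addrow_conjugate:
  fixes M :: "'a::comm_ring_1 mat"
  assumes "M \<in> carrier_mat n n" "r < n" "c < n" "r \<noteq> c"
  shows "similar_mat M (addrow_mat n t r c * M * addrow_mat n (- t) r c)"
proof (rule similar_matI)
  let ?X = "addrow_mat n t r c" and ?Y = "addrow_mat n (- t) r c"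
  show YX: "?Y * ?X = 1\<^sub>m n"
    using addrow_mat_inv[of r n c "- t"] assms by simp
  have cancel: "?Y * (?X * Z) = Z" if "Z \<in> carrier_mat n n" for Z
  proof -
    have "?Y * (?X * Z) = (?Y * ?X) * Z"
      by (rule assoc_mult_mat[symmetric]) (use that in auto)
    then show ?thesis
      using that YX by simp
  qed
  show "M = ?Y * (?X * M * ?Y) * ?X"
    using assms YX cancel by (simp add: assoc_mult_mat[of _ n n _ n _ n])
qed (use assms addrow_mat_inv in auto)

lemma similar_mat_zero_corner_offdiag:
  fixes M :: "'a::field mat"
  assumes M: "M \<in> carrier_mat n n" and j: "0 < j" "j < n"
    and nz: "M $$ (j, 0) \<noteq> 0 \<or> M $$ (0, j) \<noteq> 0"
  shows "\<exists>M'. similar_mat M M' \<and> M' \<in> carrier_mat n n \<and> M' $$ (0, 0) = 0"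
proof -
  have by_conjugation: "\<exists>M'. similar_mat M M' \<and> M' \<in> carrier_mat n n \<and> M' $$ (0, 0) = 0"
    if "r < n" "c < n" "r \<noteq> c" and "M $$ (0, 0) + (if 0 = r then t * M $$ (c, 0) else 0)
      - (if 0 = c then t * M $$ (0, r) else 0) = 0"
    for t r c
    using that M similar_mat_addrow_conjugate[OF M \<open>r < n\<close> \<open>c < n\<close> \<open>r \<noteq> c\<close>, of t]
      mult_carrier_mat[OF mult_carrier_mat[OF addrow_mat_carrier M] addrow_mat_carrier]
    by (intro exI[of _ "addrow_mat n t r c * M * addrow_mat n (- t) r c"])
      (auto simp: addrow_mat_conjugate_index[OF M] simp del: index_mult_mat)
  from nz show ?thesis
  proof
    assume "M $$ (j, 0) \<noteq> 0"
    then show ?thesis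
      using j by (intro by_conjugation[of 0 j "- M $$ (0, 0) / M $$ (j, 0)"]) auto
  next
    assume "M $$ (0, j) \<noteq> 0"
    then show ?thesis
      using j by (intro by_conjugation[of j 0 "M $$ (0, 0) / M $$ (0, j)"]) auto
  qed
qed

lemma similar_mat_zero_corner:
  fixes M :: "'a::field mat"
  assumes M: "M \<in> carrier_mat n n" and n: "0 < n" and nonscalar: "M \<noteq> M $$ (0, 0) \<cdot>\<^sub>m 1\<^sub>m n"
  shows "\<exists>M'. similar_mat M M' \<and> M' \<in> carrier_mat n n \<and> M' $$ (0, 0) = 0"
proof (cases "\<exists>j. 0 < j \<and> j < n \<and> (M $$ (j, 0) \<noteq> 0 \<or> M $$ (0, j) \<noteq> 0)")
  case True
  then show ?thesis
    using similar_mat_zero_corner_offdiag[OF M] by blast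
next
  case False
  then have border: "M $$ (j, 0) = 0" "M $$ (0, j) = 0" if "0 < j" "j < n" for j
    using that by auto
  obtain a b where ab: "a < n" "b < n" and differ: "M $$ (a, b) \<noteq> (M $$ (0, 0) \<cdot>\<^sub>m 1\<^sub>m n) $$ (a, b)"
    using nonscalar M by (metis eq_matI carrier_matD index_smult_mat(2,3) index_one_mat(2,3))
  have "b \<noteq> 0"
  proof
    assume "b = 0"
    with differ ab border(1)[of a] show False
      by (cases "a = 0") auto
  qed
  have "a \<noteq> 0"
  proof
    assume "a = 0"
    with differ ab border(2)[of b] \<open>b \<noteq> 0\<close> show False
      by auto
  qed
  define M1 where "M1 = addrow_mat n 1 b 0 * M * addrow_mat n (- 1) b 0"
  have sim: "similar_mat M M1" and M1: "M1 \<in> carrier_mat n n"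
    unfolding M1_def using similar_mat_addrow_conjugate[OF M ab(2) n] \<open>b \<noteq> 0\<close> M by auto
  have "M1 $$ (a, 0) = (if a = b then M $$ (0, 0) else 0) - M $$ (a, b)"
    unfolding M1_def using ab n \<open>a \<noteq> 0\<close> \<open>b \<noteq> 0\<close> border
    by (simp add: addrow_mat_conjugate_index[OF M] del: index_mult_mat)
  then have "M1 $$ (a, 0) \<noteq> 0"
    using differ ab by auto
  then obtain M' where "similar_mat M1 M'" "M' \<in> carrier_mat n n" "M' $$ (0, 0) = 0"
    using similar_mat_zero_corner_offdiag[OF M1, of a] ab \<open>a \<noteq> 0\<close> by auto
  then show ?thesis
    using sim similar_mat_trans by blast
qed

definition singular_shifts :: "'a::field mat \<Rightarrow> 'a set" where
  "singular_shifts K = {e. det (K + e \<cdot>\<^sub>m 1\<^sub>m (dim_row K)) = 0}"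

lemma finite_singular_shifts:
  fixes K :: "'a::field mat"
  assumes K: "K \<in> carrier_mat n n"
  shows "finite (singular_shifts K)"
proof -
  have "char_poly K \<noteq> 0"
    using degree_monic_char_poly[OF K] by auto
  moreover have "singular_shifts K \<subseteq> uminus ` {x. poly (char_poly K) x = 0}"
  proof
    fix e assume "e \<in> singular_shifts K"
    then have "det (char_matrix K (- e)) = 0"
      using K by (simp add: singular_shifts_def char_matrix_def)
    then have "poly (char_poly K) (- e) = 0"
      using eigenvalue_det[OF K] eigenvalue_root_char_poly[OF K] by simp
    then show "e \<in> uminus ` {x. poly (char_poly K) x = 0}"
      by (intro rev_image_eqI[of "- e"]) auto
  qed
  ultimately show ?thesis
    using poly_roots_finite finite_subset by blast
qed

lemma det_nonzero_imp_inverse: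
  fixes A :: "'a::field mat"
  assumes "A \<in> carrier_mat n n" and "det A \<noteq> 0"
  obtains B where "B \<in> carrier_mat n n" "A * B = 1\<^sub>m n" "B * A = 1\<^sub>m n"
  using det_non_zero_imp_unit[OF assms, of undefined] that
  unfolding Units_def ring_mat_def by auto

lemma invertible_mat_shift_if_not_singular:
  fixes K :: "'a::field mat"
  assumes K: "K \<in> carrier_mat n n" and e: "e \<notin> singular_shifts K"
  shows "invertible_mat (K + e \<cdot>\<^sub>m 1\<^sub>m n)"
proof -
  have KI: "K + e \<cdot>\<^sub>m 1\<^sub>m n \<in> carrier_mat n n"
    using K by simp
  moreover have "det (K + e \<cdot>\<^sub>m 1\<^sub>m n) \<noteq> 0"
    using K e by (simp add: singular_shifts_def)
  ultimately obtain B where "B \<in> carrier_mat n n" "(K + e \<cdot>\<^sub>m 1\<^sub>m n) * B = 1\<^sub>m n"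
    "B * (K + e \<cdot>\<^sub>m 1\<^sub>m n) = 1\<^sub>m n"
    by (rule det_nonzero_imp_inverse)
  with KI show ?thesis
    unfolding invertible_mat_def inverts_mat_def by auto
qed

lemma zero_corner_block_decomposition:
  fixes M :: "'a::comm_ring_1 mat"
  assumes M: "M \<in> carrier_mat (Suc k) (Suc k)" and M00: "M $$ (0, 0) = 0"
  obtains B C D where "B \<in> carrier_mat 1 k" "C \<in> carrier_mat k 1" "D \<in> carrier_mat k k"
    "mat_trace D = mat_trace M" "M = four_block_mat (0\<^sub>m 1 1) B C D"
proof -
  obtain A B C D where sb: "split_block M 1 1 = (A, B, C, D)"
    by (cases "split_block M 1 1") auto
  have dims: "dim_row M = 1 + k" "dim_col M = 1 + k"
    using M by auto
  note blocks = split_block[OF sb dims]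
  have "A = mat 1 1 (\<lambda>ij. M $$ ij)" and D: "D = mat k k (\<lambda>(i, j). M $$ (i + 1, j + 1))"
    using sb dims unfolding split_block_def Let_def by auto
  then have "A = 0\<^sub>m 1 1"
    using M00 by (intro eq_matI) auto
  moreover have "mat_trace D = mat_trace M"
    unfolding mat_trace_def D using M M00 by (simp add: sum.lessThan_Suc_shift del: sum.lessThan_Suc)
  ultimately show ?thesis
    using that blocks by auto
qed

lemma minus_four_block_mat:
  assumes "A1 \<in> carrier_mat nr1 nc1" "B1 \<in> carrier_mat nr1 nc2"
    "C1 \<in> carrier_mat nr2 nc1" "D1 \<in> carrier_mat nr2 nc2"
    and "A2 \<in> carrier_mat nr1 nc1" "B2 \<in> carrier_mat nr1 nc2"
    "C2 \<in> carrier_mat nr2 nc1" "D2 \<in> carrier_mat nr2 nc2"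
  shows "four_block_mat A1 B1 C1 D1 - four_block_mat A2 B2 C2 D2
    = four_block_mat (A1 - A2) (B1 - B2) (C1 - C2) (D1 - D2)"
  by (rule eq_matI) (use assms in auto)

lemma border_is_commutator:
  fixes p q :: "'a::field mat"
  assumes inf: "infinite (UNIV :: 'a set)"
    and p: "p \<in> carrier_mat k k" and q: "q \<in> carrier_mat k k"
    and B: "B \<in> carrier_mat 1 k" and C: "C \<in> carrier_mat k 1"
  shows "is_commutator (Suc k) (four_block_mat (0\<^sub>m 1 1) B C (p * q - q * p))"
proof -
  obtain e where "e \<notin> singular_shifts (- p)"
    using ex_new_if_finite[OF inf finite_singular_shifts[of "- p" k]] p by auto
  moreover have "- p + e \<cdot>\<^sub>m 1\<^sub>m k = e \<cdot>\<^sub>m 1\<^sub>m k - p"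
    using p by (intro eq_matI) auto
  ultimately have "det (e \<cdot>\<^sub>m 1\<^sub>m k - p) \<noteq> 0"
    using p by (simp add: singular_shifts_def)
  moreover have eIp: "e \<cdot>\<^sub>m 1\<^sub>m k - p \<in> carrier_mat k k"
    using p by (rule minus_carrier_mat)
  ultimately obtain W where W: "W \<in> carrier_mat k k" and eW: "(e \<cdot>\<^sub>m 1\<^sub>m k - p) * W = 1\<^sub>m k"
    and We: "W * (e \<cdot>\<^sub>m 1\<^sub>m k - p) = 1\<^sub>m k"
    by (metis det_nonzero_imp_inverse)
  \<comment> \<open>For \<open>P = diag e p\<close> and \<open>Q = [[0, X], [Y, q]]\<close> the border of \<open>P Q - Q P\<close> is
    \<open>X (e I - p)\<close> and \<open>- (e I - p) Y\<close>; \<open>W\<close> inverts \<open>e I - p\<close>.\<close>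
  define X where "X = B * W"
  define Y where "Y = - (W * C)"
  have X: "X \<in> carrier_mat 1 k" and Y: "Y \<in> carrier_mat k 1"
    unfolding X_def Y_def using B C W by auto
  have top: "e \<cdot>\<^sub>m X - X * p = B"
  proof -
    have "B = B * (W * (e \<cdot>\<^sub>m 1\<^sub>m k - p))"
      using B We by simp
    also have "\<dots> = X * (e \<cdot>\<^sub>m 1\<^sub>m k - p)"
      unfolding X_def by (rule assoc_mult_mat[symmetric, OF B W eIp])
    also have "\<dots> = e \<cdot>\<^sub>m X - X * p"
      unfolding mult_minus_distrib_mat[OF X smult_carrier_mat[OF one_carrier_mat] p]
        mult_smult_distrib[OF X one_carrier_mat] right_mult_one_mat[OF X] ..
    finally show ?thesis
      by simp
  qed
  have left: "p * Y - e \<cdot>\<^sub>m Y = C"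
  proof -
    have "C = (e \<cdot>\<^sub>m 1\<^sub>m k - p) * W * C"
      using C eW by simp
    also have "\<dots> = (e \<cdot>\<^sub>m 1\<^sub>m k - p) * (W * C)"
      by (rule assoc_mult_mat[OF eIp W C])
    also have "\<dots> = e \<cdot>\<^sub>m (W * C) - p * (W * C)"
      using W C unfolding minus_mult_distrib_mat[OF smult_carrier_mat[OF one_carrier_mat] p
          mult_carrier_mat[OF W C]]
        mult_smult_assoc_mat[OF one_carrier_mat mult_carrier_mat[OF W C]] by simp
    also have "\<dots> = p * Y - e \<cdot>\<^sub>m Y"
      unfolding Y_def using C W p by (intro eq_matI) auto
    finally show ?thesis
      by simp
  qed
  define P where "P = four_block_mat (e \<cdot>\<^sub>m 1\<^sub>m 1) (0\<^sub>m 1 k) (0\<^sub>m k 1) p"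
  define Q where "Q = four_block_mat (0\<^sub>m 1 1) X Y q"
  have P: "P \<in> carrier_mat (Suc k) (Suc k)" and Q: "Q \<in> carrier_mat (Suc k) (Suc k)"
    unfolding P_def Q_def using p q X Y by auto
  have "P * Q = four_block_mat (0\<^sub>m 1 1) (e \<cdot>\<^sub>m X) (p * Y) (p * q)"
    unfolding P_def Q_def using X Y p q
    by (subst mult_four_block_mat[of _ 1 1 _ k _ k _ _ 1 _ k])
      (auto simp: mult_smult_assoc_mat[of _ 1 1 _ k])
  moreover have "Q * P = four_block_mat (0\<^sub>m 1 1) (X * p) (e \<cdot>\<^sub>m Y) (q * p)"
    unfolding P_def Q_def using X Y p q
    by (subst mult_four_block_mat[of _ 1 1 _ k _ k _ _ 1 _ k])
      (auto simp: mult_smult_distrib[of _ k 1 _ 1])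
  ultimately have "P * Q - Q * P = four_block_mat (0\<^sub>m 1 1 - 0\<^sub>m 1 1) (e \<cdot>\<^sub>m X - X * p) (p * Y - e \<cdot>\<^sub>m Y) (p * q - q * p)"
    using X Y p q by (simp add: minus_four_block_mat[of _ 1 1 _ k _ k])
  also have "\<dots> = four_block_mat (0\<^sub>m 1 1) B C (p * q - q * p)"
    unfolding top left by (intro cong_four_block_mat) auto
  finally show ?thesis
    unfolding is_commutator_def using P Q
    by (intro exI[of _ P] exI[of _ Q]) auto
qed

lemma smult_one_is_commutator:
  fixes \<mu> :: "'a::comm_ring_1"
  assumes n\<mu>: "of_nat n * \<mu> = 0"
  shows "is_commutator n (\<mu> \<cdot>\<^sub>m 1\<^sub>m n)"
proof -
  \<comment> \<open>\<open>P Q - Q P = diag \<mu> \<dots> \<mu> (- (n - 1) \<mu>)\<close>, and \<open>- (n - 1) \<mu> = \<mu>\<close> since \<open>n \<mu> = 0\<close>.\<close>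
  define P where "P = mat n n (\<lambda>(a, b). if b = Suc a then \<mu> * of_nat b else 0 :: 'a)"
  define Q where "Q = mat n n (\<lambda>(a, b). if a = Suc b then 1 else 0 :: 'a)"
  have P: "P \<in> carrier_mat n n" and Q: "Q \<in> carrier_mat n n"
    unfolding P_def Q_def by auto
  have PQ: "(P * Q) $$ (a, c) = (if a = c \<and> Suc a < n then \<mu> * of_nat (Suc a) else 0)"
    if "a < n" "c < n" for a c
  proof -
    have "(P * Q) $$ (a, c) = (\<Sum>k\<in>{0..<n}. P $$ (a, k) * Q $$ (k, c))"
      using P Q that by (simp add: scalar_prod_def)
    also have "\<dots> =
        (\<Sum>k\<in>{0..<n}. if k = Suc a then (if a = c then \<mu> * of_nat (Suc a) else 0) else 0)"
      using that by (intro sum.cong refl) (auto simp: P_def Q_def)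
    finally show ?thesis
      by (simp add: sum.delta')
  qed
  have QP: "(Q * P) $$ (a, c) = (if a = c then \<mu> * of_nat a else 0)"
    if "a < n" "c < n" for a c
  proof -
    have "(Q * P) $$ (a, c) = (\<Sum>k\<in>{0..<n}. Q $$ (a, k) * P $$ (k, c))"
      using P Q that by (simp add: scalar_prod_def)
    also have "\<dots> =
        (\<Sum>k\<in>{0..<n}. if k = a - 1 then (if 0 < a \<and> a = c then \<mu> * of_nat a else 0) else 0)"
      using that by (intro sum.cong refl) (auto simp: P_def Q_def)
    finally show ?thesis
      using that by (auto simp: sum.delta')
  qed
  have last: "\<mu> * of_nat a = - \<mu>" if "n = Suc a" for a
    using n\<mu> that by (simp add: algebra_simps eq_neg_iff_add_eq_0)
  have "\<mu> \<cdot>\<^sub>m 1\<^sub>m n = P * Q - Q * P"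
    by (rule eq_matI)
      (use P Q PQ QP last in \<open>auto simp: algebra_simps not_less_eq intro: le_antisym\<close>)
  then show ?thesis
    unfolding is_commutator_def using P Q by (intro exI[of _ P] exI[of _ Q]) auto
qed

theorem trace_zero_imp_is_commutator:
  fixes M :: "'a::field mat"
  assumes inf: "infinite (UNIV :: 'a set)"
  shows "M \<in> carrier_mat n n \<Longrightarrow> mat_trace M = 0 \<Longrightarrow> is_commutator n M"
proof (induction n arbitrary: M)
  case 0
  then have "M = 0\<^sub>m 0 0 * 0\<^sub>m 0 0 - 0\<^sub>m 0 0 * 0\<^sub>m 0 0"
    by (intro eq_matI) auto
  then show ?case
    unfolding is_commutator_def by (intro exI[of _ "0\<^sub>m 0 0"]) auto
next
  case (Suc k)
  show ?case
  proof (cases "M = M $$ (0, 0) \<cdot>\<^sub>m 1\<^sub>m (Suc k)")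
    case True
    then have "of_nat (Suc k) * M $$ (0, 0) = 0"
      using Suc.prems(2) mat_trace_smult_one by metis
    then show ?thesis
      using smult_one_is_commutator True by metis
  next
    case False
    then obtain M' where sim: "similar_mat M M'" and M': "M' \<in> carrier_mat (Suc k) (Suc k)"
      and M'00: "M' $$ (0, 0) = 0"
      using similar_mat_zero_corner[OF Suc.prems(1)] by auto
    from M' M'00 obtain B C D where B: "B \<in> carrier_mat 1 k" and C: "C \<in> carrier_mat k 1"
      and D: "D \<in> carrier_mat k k" and "mat_trace D = mat_trace M'"
      and M'_blocks: "M' = four_block_mat (0\<^sub>m 1 1) B C D"
      by (rule zero_corner_block_decomposition)
    moreover have "mat_trace M' = 0"
      using mat_trace_similar[OF sim] Suc.prems(2) by simp
    ultimately obtain p q where "p \<in> carrier_mat k k" "q \<in> carrier_mat k k" "D = p * q - q * p"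
      using Suc.IH[OF D] unfolding is_commutator_def by auto
    then have "is_commutator (Suc k) M'"
      unfolding M'_blocks using border_is_commutator[OF inf _ _ B C] by simp
    then show ?thesis
      using is_commutator_similar[OF sim M'] by simp
  qed
qed

lemma trace_zero_family_commutators:
  fixes M :: "'i \<Rightarrow> 'a::field mat"
  assumes "infinite (UNIV :: 'a set)"
    and "\<forall>i. M i \<in> carrier_mat (m i) (m i) \<and> mat_trace (M i) = 0"
  obtains p q where "\<And>i. p i \<in> carrier_mat (m i) (m i)" "\<And>i. q i \<in> carrier_mat (m i) (m i)"
    "\<And>i. M i = p i * q i - q i * p i"
proof -
  have "\<forall>i. is_commutator (m i) (M i)"
    using trace_zero_imp_is_commutator[OF assms(1)] assms(2) by auto
  then show ?thesis
    using that unfolding is_commutator_def by metis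
qed

lemma commutator_add_scalar:
  fixes A B :: "'a::comm_ring_1 mat"
  assumes A: "A \<in> carrier_mat n n" and B: "B \<in> carrier_mat n n"
  shows "(A + a \<cdot>\<^sub>m 1\<^sub>m n) * (B + b \<cdot>\<^sub>m 1\<^sub>m n) - (B + b \<cdot>\<^sub>m 1\<^sub>m n) * (A + a \<cdot>\<^sub>m 1\<^sub>m n)
    = A * B - B * A"
proof -
  have shifted_mult: "((X + x \<cdot>\<^sub>m 1\<^sub>m n) * (Y + y \<cdot>\<^sub>m 1\<^sub>m n)) $$ (i, j) =
      (X * Y) $$ (i, j) + y * X $$ (i, j) + x * Y $$ (i, j) + (if i = j then x * y else 0)"
    if X: "X \<in> carrier_mat n n" and Y: "Y \<in> carrier_mat n n" and ij: "i < n" "j < n"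
    for X Y :: "'a mat" and x y :: 'a and i j
  proof -
    have "((X + x \<cdot>\<^sub>m 1\<^sub>m n) * (Y + y \<cdot>\<^sub>m 1\<^sub>m n)) $$ (i, j) = (\<Sum>k\<in>{0..<n}.
        (X $$ (i, k) + (if i = k then x else 0)) * (Y $$ (k, j) + (if k = j then y else 0)))"
      using X Y ij by (auto simp: scalar_prod_def intro!: sum.cong)
    also have "\<dots> = (\<Sum>k\<in>{0..<n}. X $$ (i, k) * Y $$ (k, j) + ((if k = j then y * X $$ (i, j) else 0)
        + (if k = i then x * Y $$ (i, j) else 0) + (if k = i \<and> i = j then x * y else 0)))"
      by (intro sum.cong refl) (auto simp: algebra_simps)
    also have "\<dots> = (X * Y) $$ (i, j) + y * X $$ (i, j) + x * Y $$ (i, j) + (if i = j then x * y else 0)"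
      using X Y ij by (simp add: sum.distrib scalar_prod_def add.assoc)
    finally show ?thesis .
  qed
  show ?thesis
    by (rule eq_matI)
      (use A B in \<open>auto simp: shifted_mult[OF A B] shifted_mult[OF B A] algebra_simps
        simp del: index_mult_mat(1)\<close>)
qed

lemma commutator_add_scalar_left:
  fixes A B :: "'a::comm_ring_1 mat"
  assumes A: "A \<in> carrier_mat n n" and B: "B \<in> carrier_mat n n"
  shows "(A + a \<cdot>\<^sub>m 1\<^sub>m n) * B - B * (A + a \<cdot>\<^sub>m 1\<^sub>m n) = A * B - B * A"
proof -
  have "B = B + 0 \<cdot>\<^sub>m 1\<^sub>m n"
    using B by (intro eq_matI) auto
  then show ?thesis
    using commutator_add_scalar[OF A B, of a 0] by metis
qed

text \<open>Under row-major vectorisation of \<open>m \<times> n\<close> matrices, \<open>sylvester_mat A B\<close> is the matrix of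
  \<open>X \<mapsto> A X - X B\<close>.\<close>
definition sylvester_mat :: "'a::comm_ring_1 mat \<Rightarrow> 'a mat \<Rightarrow> 'a mat" where
  "sylvester_mat A B = kron A (1\<^sub>m (dim_row B)) - kron (1\<^sub>m (dim_row A)) (transpose_mat B)"

lemma sylvester_mat_carrier:
  assumes "A \<in> carrier_mat m m" "B \<in> carrier_mat n n"
  shows "sylvester_mat A B \<in> carrier_mat (m * n) (m * n)"
  using assms by (auto simp: sylvester_mat_def kron_def)

lemma finite_singular_shifts_sylvester_mat:
  fixes A B :: "'a::field mat"
  assumes "A \<in> carrier_mat m m" "B \<in> carrier_mat n n"
  shows "finite (singular_shifts (sylvester_mat A B))"
  by (rule finite_singular_shifts[OF sylvester_mat_carrier[OF assms]])

lemma sylvester_mat_add_scalar: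
  fixes A B :: "'a::comm_ring_1 mat"
  assumes A: "A \<in> carrier_mat m m" and B: "B \<in> carrier_mat n n"
  shows "sylvester_mat (A + a \<cdot>\<^sub>m 1\<^sub>m m) (B + b \<cdot>\<^sub>m 1\<^sub>m n)
    = sylvester_mat A B + (a - b) \<cdot>\<^sub>m 1\<^sub>m (m * n)"
proof (rule eq_matI)
  fix i j
  assume "i < dim_row (sylvester_mat A B + (a - b) \<cdot>\<^sub>m 1\<^sub>m (m * n))"
    and "j < dim_col (sylvester_mat A B + (a - b) \<cdot>\<^sub>m 1\<^sub>m (m * n))"
  then have ij: "i < m * n" "j < m * n"
    by auto
  then have "0 < n"
    by (cases n) auto
  then have "i div n < m" "j div n < m" "i mod n < n" "j mod n < n"
    using ij by (auto simp: less_mult_imp_div_less)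
  moreover have "i = j \<longleftrightarrow> i div n = j div n \<and> i mod n = j mod n"
    by (metis div_mult_mod_eq)
  ultimately show "sylvester_mat (A + a \<cdot>\<^sub>m 1\<^sub>m m) (B + b \<cdot>\<^sub>m 1\<^sub>m n) $$ (i, j)
      = (sylvester_mat A B + (a - b) \<cdot>\<^sub>m 1\<^sub>m (m * n)) $$ (i, j)"
    using A B ij by (auto simp: sylvester_mat_def kron_def algebra_simps)
qed (use A B in \<open>auto simp: sylvester_mat_def kron_def\<close>)

lemma invertible_sylvester_mat_add_scalar:
  fixes A B :: "'a::field mat"
  assumes A: "A \<in> carrier_mat m m" and B: "B \<in> carrier_mat n n"
    and "a - b \<notin> singular_shifts (sylvester_mat A B)"
  shows "invertible_mat (sylvester_mat (A + a \<cdot>\<^sub>m 1\<^sub>m m) (B + b \<cdot>\<^sub>m 1\<^sub>m n))"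
  unfolding sylvester_mat_add_scalar[OF A B]
  by (rule invertible_mat_shift_if_not_singular[OF sylvester_mat_carrier[OF A B] assms(3)])

lemma int_telescoping_exists:
  fixes d :: "int \<Rightarrow> 'a::ab_group_add"
  shows "\<exists>x. \<forall>j. x j - x (j + 1) = d j"
proof -
  define x where "x j = (if 0 \<le> j then - (\<Sum>l<nat j. d (int l)) else (\<Sum>l<nat (- j). d (- int l - 1)))"
    for j
  have "x j - x (j + 1) = d j" for j
  proof (cases "0 \<le> j")
    case True
    then have "nat (j + 1) = Suc (nat j)"
      by simp
    with True show ?thesis
      unfolding x_def by simp
  next
    case False
    define N where "N = nat (- j - 1)"
    have "j = - int N - 1"
      using False unfolding N_def by simp
    then show ?thesis
      unfolding x_def by (cases N) (simp_all add: nat_add_distrib)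
  qed
  then show ?thesis
    by blast
qed

lemma exists_steps_avoiding:
  fixes F :: "int \<Rightarrow> 'a::ab_group_add set"
  assumes inf: "infinite (UNIV :: 'a set)" and fin: "\<And>j. finite (F j)"
  shows "\<exists>x. \<forall>j. x j - x (j + 1) \<notin> F j"
proof -
  have "\<forall>j. \<exists>e. e \<notin> F j"
    using ex_new_if_finite[OF inf fin] by blast
  then obtain d where "\<And>j. d j \<notin> F j"
    by metis
  moreover obtain x where "\<And>j. x j - x (j + 1) = d j"
    using int_telescoping_exists[of d] by blast
  ultimately have "\<forall>j. x j - x (j + 1) \<notin> F j"
    by simp
  then show ?thesis
    by blast
qed

lemma exists_interleaved_steps_avoiding:
  fixes F G :: "int \<Rightarrow> 'a::ab_group_add set"
  assumes inf: "infinite (UNIV :: 'a set)" and fin: "\<And>i. finite (F i)" "\<And>i. finite (G i)"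
  shows "\<exists>\<alpha> \<gamma>. \<forall>i. \<alpha> i - \<gamma> i \<notin> F i \<and> \<gamma> i - \<alpha> (i + 1) \<notin> G i"
proof -
  define H where "H j = (if even j then F (j div 2) else G (j div 2))" for j
  have "finite (H j)" for j
    unfolding H_def using fin by simp
  then obtain x where x: "\<And>j. x j - x (j + 1) \<notin> H j"
    using exists_steps_avoiding[OF inf] by blast
  have "x (2 * i) - x (2 * i + 1) \<notin> F i" "x (2 * i + 1) - x (2 * (i + 1)) \<notin> G i" for i
    using x[of "2 * i"] x[of "2 * i + 1"] unfolding H_def by (simp_all add: algebra_simps)
  then show ?thesis
    by (intro exI[of _ "\<lambda>i. x (2 * i)"] exI[of _ "\<lambda>i. x (2 * i + 1)"]) simp
qed

theorem lemmaA:
  fixes m n :: "int \<Rightarrow> nat" and M N :: "int \<Rightarrow> 'a :: field mat"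
  assumes "infinite (UNIV :: 'a set)"
    and "\<forall>i. M i \<in> carrier_mat (m i) (m i) \<and> mat_trace (M i) = 0"
    and "\<forall>i. N i \<in> carrier_mat (n i) (n i) \<and> mat_trace (N i) = 0"
  shows "\<exists>p q s t. \<forall>i.
            p i \<in> carrier_mat (m i) (m i) \<and> q i \<in> carrier_mat (m i) (m i) \<and>
            s i \<in> carrier_mat (n i) (n i) \<and> t i \<in> carrier_mat (n i) (n i) \<and>
            M i = p i * q i - q i * p i \<and>
            N i = s i * t i - t i * s i \<and>
            invertible_mat (kron (p i) (1\<^sub>m (n i)) - kron (1\<^sub>m (m i)) (transpose_mat (s i))) \<and>
            invertible_mat (kron (q (i + 1)) (1\<^sub>m (m i)) - kron (1\<^sub>m (m (i + 1))) (transpose_mat (q i))) \<and>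
            invertible_mat (kron (s i) (1\<^sub>m (m (i + 1))) - kron (1\<^sub>m (n i)) (transpose_mat (p (i + 1))))"
proof -
  obtain p0 q0 where p0: "\<And>i. p0 i \<in> carrier_mat (m i) (m i)"
    and q0: "\<And>i. q0 i \<in> carrier_mat (m i) (m i)" and pq0: "\<And>i. M i = p0 i * q0 i - q0 i * p0 i"
    using trace_zero_family_commutators[OF assms(1,2)] by blast
  obtain s0 t0 where s0: "\<And>i. s0 i \<in> carrier_mat (n i) (n i)"
    and t0: "\<And>i. t0 i \<in> carrier_mat (n i) (n i)" and st0: "\<And>i. N i = s0 i * t0 i - t0 i * s0 i"
    using trace_zero_family_commutators[OF assms(1,3)] by blast
  obtain \<alpha> \<gamma> where \<alpha>\<gamma>: "\<And>i. \<alpha> i - \<gamma> i \<notin> singular_shifts (sylvester_mat (p0 i) (s0 i))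
      \<and> \<gamma> i - \<alpha> (i + 1) \<notin> singular_shifts (sylvester_mat (s0 i) (p0 (i + 1)))"
    using exists_interleaved_steps_avoiding[OF assms(1),
        of "\<lambda>i. singular_shifts (sylvester_mat (p0 i) (s0 i))"
        "\<lambda>i. singular_shifts (sylvester_mat (s0 i) (p0 (i + 1)))"]
      finite_singular_shifts_sylvester_mat[OF p0 s0] finite_singular_shifts_sylvester_mat[OF s0 p0]
    by blast
  obtain \<beta> where \<beta>: "\<And>i. \<beta> i - \<beta> (i + 1) \<notin> singular_shifts (sylvester_mat (q0 (i + 1)) (q0 i))"
    using exists_steps_avoiding[OF assms(1),
        of "\<lambda>i. singular_shifts (sylvester_mat (q0 (i + 1)) (q0 i))"]
      finite_singular_shifts_sylvester_mat[OF q0 q0]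
    by blast
  define p where "p i = p0 i + \<alpha> i \<cdot>\<^sub>m 1\<^sub>m (m i)" for i
  define q where "q i = q0 i + (- \<beta> i) \<cdot>\<^sub>m 1\<^sub>m (m i)" for i
  define s where "s i = s0 i + \<gamma> i \<cdot>\<^sub>m 1\<^sub>m (n i)" for i
  have invertible: "invertible_mat (sylvester_mat (p i) (s i))"
    "invertible_mat (sylvester_mat (q (i + 1)) (q i))"
    "invertible_mat (sylvester_mat (s i) (p (i + 1)))" for i
    unfolding p_def q_def s_def using \<alpha>\<gamma>[of i] \<beta>[of i]
    by (auto intro!: invertible_sylvester_mat_add_scalar p0 q0 s0)
  show ?thesis
    by (insert p0 q0 s0 t0 invertible,
        rule exI[of _ p], rule exI[of _ q], rule exI[of _ s], rule exI[of _ t0])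
      (simp add: sylvester_mat_def p_def q_def s_def pq0 st0 commutator_add_scalar[OF p0 q0]
        commutator_add_scalar_left[OF s0 t0])
qed

end
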